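(* (i) For every integer $k\ge1$, $\alpha_{\mathrm{od}}(Q_{4k})\ge2\sum_{i=1}^{k}\binom{4k-1}{2i-1}$. (ii) $\alpha_{\mathrm{od}}(Q_4)=6$, $\alpha_{\mathrm{od}}(Q_6)=24$, and $\alpha_{\mathrm{od}}(Q_8)=112$. (iii) For every even $d\ge8$, $\alpha_{\mathrm{od}}(Q_d)\ge\frac{7}{16}\cdot2^d$.
   Context: $Q_d$ is the $d$-dimensional hypercube: vertex set $\{0,1\}^d$, two vertices adjacent iff they differ in exactly one coordinate. An odd independent set in $G=(V,E)$ is an independent set $S$ such that every $v\in V\setminus S$ has either no neighbor or an odd number of neighbors in $S$; $\alpha_{\mathrm{od}}(G)$ is its maximum size. *)

theory Defs
  imports Complex_Main
begin

definition independent_set :: "'a set \<Rightarrow> ('a \<Rightarrow> 'a \<Rightarrow> bool) \<Rightarrow> 'a set \<Rightarrow> bool" where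
  "independent_set V E S \<longleftrightarrow> S \<subseteq> V \<and> (\<forall>u\<in>S. \<forall>v\<in>S. \<not> E u v)"

definition odd_independent_set :: "'a set \<Rightarrow> ('a \<Rightarrow> 'a \<Rightarrow> bool) \<Rightarrow> 'a set \<Rightarrow> bool" where
  "odd_independent_set V E S \<longleftrightarrow> independent_set V E S \<and>
     (\<forall>v\<in>V - S. card {u\<in>S. E v u} = 0 \<or> odd (card {u\<in>S. E v u}))"

definition alpha_od :: "'a set \<Rightarrow> ('a \<Rightarrow> 'a \<Rightarrow> bool) \<Rightarrow> nat" where
  "alpha_od V E = Max (card ` {S. odd_independent_set V E S})"

definition hypercube_vertices :: "nat \<Rightarrow> bool list set" where
  "hypercube_vertices d = {x. length x = d}"

definition hypercube_adj :: "bool list \<Rightarrow> bool list \<Rightarrow> bool" where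
  "hypercube_adj x y \<longleftrightarrow> length x = length y \<and> card {i. i < length x \<and> x ! i \<noteq> y ! i} = 1"

definition alpha_od_cube :: "nat \<Rightarrow> nat" where
  "alpha_od_cube d = alpha_od (hypercube_vertices d) hypercube_adj"

end

theory Submission
  imports Defs
begin

text \<open>Model \<open>Q\<^sub>n\<close> on the subsets of \<open>{..<n}\<close>. Upper bounds come from double counting: a
vertex outside an odd independent set \<open>S\<close> has degree 0 or odd degree, and these degrees add
up to \<open>n |S|\<close>. For even \<open>n\<close>, an outside vertex of the largest odd degree \<open>n - 1\<close> has a
neighbour of degree 0, which limits the number of such vertices and gives
\<open>n |S| \<le> (n - 1) 2\<^sup>n\<^sup>-\<^sup>1\<close>, i.e. 6 for \<open>Q\<^sub>4\<close> and 112 for \<open>Q\<^sub>8\<close>. For \<open>Q\<^sub>6\<close> this only gives 26; the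
bound 24 follows unless some degree-0 vertex is surrounded by vertices of degree 5, and that
configuration is analysed directly. Lower bounds: reading the coordinates of \<open>Q\<^bsub>2\<^sup>r\<^esub>\<close> as
vectors of \<open>GF(2)\<^sup>r\<close>, the even sets with nonzero vector sum attain the upper bound; odd sets
split at the middle layer according to the last coordinate give (i); and the projection
\<open>Q\<^sub>n\<^sub>+\<^sub>2 \<rightarrow> Q\<^sub>n\<close>, \<open>(x, a, b) \<mapsto> x + (a + b) e\<^sub>0\<close>, pulls odd independent sets back to sets four times
as large, which gives \<open>Q\<^sub>6\<close> and (iii).\<close>

section \<open>Isomorphism invariance\<close>

lemma odd_independent_set_iso:
  assumes "bij_betw f V W" and "\<forall>u\<in>V. \<forall>v\<in>V. E u v = F (f u) (f v)" and "S \<subseteq> V"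
  shows "odd_independent_set V E S \<longleftrightarrow> odd_independent_set W F (f ` S)"
proof -
  have inj: "inj_on f V" and img: "f ` V = W"
    using assms(1) by (auto simp: bij_betw_def)
  have "independent_set V E S \<longleftrightarrow> independent_set W F (f ` S)"
    using assms img unfolding independent_set_def by (auto; meson subsetD)
  moreover have "W - f ` S = f ` (V - S)"
    using img inj assms(3) by (auto simp: inj_on_def)
  moreover have "card {u\<in>S. E v u} = card {u\<in>f ` S. F (f v) u}" if "v \<in> V" for v
  proof -
    have "{u\<in>f ` S. F (f v) u} = f ` {u\<in>S. E v u}"
      using assms(2,3) that by auto
    moreover have "inj_on f {u\<in>S. E v u}"
      using inj assms(3) by (auto intro: inj_on_subset)
    ultimately show ?thesis
      by (simp add: card_image)
  qed
  ultimately show ?thesis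
    unfolding odd_independent_set_def by auto
qed

lemma alpha_od_iso:
  assumes bij: "bij_betw f V W" and adj: "\<forall>u\<in>V. \<forall>v\<in>V. E u v = F (f u) (f v)"
  shows "alpha_od V E = alpha_od W F"
proof -
  have inj: "inj_on f V" and img: "f ` V = W"
    using bij by (auto simp: bij_betw_def)
  have subset_V: "S \<subseteq> V" if "odd_independent_set V E S" for S
    using that by (simp add: odd_independent_set_def independent_set_def)
  have "{T. odd_independent_set W F T} = (\<lambda>S. f ` S) ` {S. odd_independent_set V E S}"
  proof (intro equalityI subsetI)
    fix T assume T: "T \<in> {T. odd_independent_set W F T}"
    then have "T \<subseteq> W"
      by (simp add: odd_independent_set_def independent_set_def)
    then have "T = f ` (V \<inter> f -` T)"
      using img by auto
    moreover have "odd_independent_set V E (V \<inter> f -` T)"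
      using T calculation odd_independent_set_iso[OF bij adj, of "V \<inter> f -` T"] by auto
    ultimately show "T \<in> (\<lambda>S. f ` S) ` {S. odd_independent_set V E S}"
      by blast
  qed (use odd_independent_set_iso[OF bij adj] subset_V in auto)
  then have "card ` {T. odd_independent_set W F T} = card ` {S. odd_independent_set V E S}"
    using subset_V inj by (auto simp: image_image card_image inj_on_subset intro!: image_cong)
  then show ?thesis
    unfolding alpha_od_def by simp
qed

section \<open>The hypercube on subsets\<close>

definition flip :: "nat \<Rightarrow> nat set \<Rightarrow> nat set" where
  "flip i A = sym_diff A {i}"

lemma mem_flip_iff: "x \<in> flip i A \<longleftrightarrow> (x = i \<longleftrightarrow> x \<notin> A)"
  unfolding flip_def by auto

lemma flip_flip [simp]: "flip i (flip i A) = A"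
  unfolding flip_def by auto

lemma flip_commute: "flip i (flip j A) = flip j (flip i A)"
  unfolding flip_def by auto

lemma flip_eq_flip_iff [simp]: "flip i A = flip j A \<longleftrightarrow> i = j"
  unfolding flip_def by auto

lemma inj_flip: "inj (flip i)"
  by (metis flip_flip injI)

lemma flip_subset_lessThan: "A \<subseteq> {..<n} \<Longrightarrow> i < n \<Longrightarrow> flip i A \<subseteq> {..<n}"
  unfolding flip_def by auto

lemma card_flip: "finite A \<Longrightarrow> card (flip i A) = (if i \<in> A then card A - 1 else Suc (card A))"
  unfolding flip_def by (auto simp: insert_absorb Un_Diff[symmetric] Diff_insert_absorb)

lemma even_card_flip_iff: "finite A \<Longrightarrow> even (card (flip i A)) \<longleftrightarrow> odd (card A)"
  by (auto simp: card_flip card_gt_0_iff)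

lemma sym_diff_flip: "sym_diff u (flip i A) = flip i (sym_diff u A)"
  unfolding flip_def by auto

lemma eq_flip_iff_sym_diff: "B = flip i A \<longleftrightarrow> sym_diff A B = {i}"
  unfolding flip_def by auto

definition bit_set :: "bool list \<Rightarrow> nat set" where
  "bit_set x = {i. i < length x \<and> x ! i}"

lemma bij_betw_bit_set: "bij_betw bit_set (hypercube_vertices n) (Pow {..<n})"
proof (rule bij_betw_byWitness[where f' = "\<lambda>A. map (\<lambda>i. i \<in> A) [0..<n]"])
  show "\<forall>x\<in>hypercube_vertices n. map (\<lambda>i. i \<in> bit_set x) [0..<n] = x"
    by (auto simp: hypercube_vertices_def bit_set_def intro: nth_equalityI)
qed (auto simp: hypercube_vertices_def bit_set_def)

definition cube_adj :: "nat \<Rightarrow> nat set \<Rightarrow> nat set \<Rightarrow> bool" where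
  "cube_adj n A B \<longleftrightarrow> (\<exists>i<n. B = flip i A)"

lemma hypercube_adj_iff_cube_adj:
  assumes "length x = n" "length y = n"
  shows "hypercube_adj x y \<longleftrightarrow> cube_adj n (bit_set x) (bit_set y)"
proof -
  have "{i. i < length x \<and> x ! i \<noteq> y ! i} = sym_diff (bit_set x) (bit_set y)"
    using assms by (auto simp: bit_set_def)
  moreover have "sym_diff (bit_set x) (bit_set y) \<subseteq> {..<n}"
    using assms by (auto simp: bit_set_def)
  ultimately show ?thesis
    using assms unfolding hypercube_adj_def cube_adj_def eq_flip_iff_sym_diff
    by (auto simp: card_1_singleton_iff)
qed

lemma alpha_od_cube_eq: "alpha_od_cube n = alpha_od (Pow {..<n}) (cube_adj n)"
  unfolding alpha_od_cube_def
  by (rule alpha_od_iso[OF bij_betw_bit_set]) (simp add: hypercube_vertices_def hypercube_adj_iff_cube_adj)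

definition cube_deg :: "nat \<Rightarrow> nat set set \<Rightarrow> nat set \<Rightarrow> nat" where
  "cube_deg n S A = card {i. i < n \<and> flip i A \<in> S}"

definition cube_odd_indep :: "nat \<Rightarrow> nat set set \<Rightarrow> bool" where
  "cube_odd_indep n S \<longleftrightarrow> S \<subseteq> Pow {..<n} \<and> (\<forall>A\<in>S. \<forall>i<n. flip i A \<notin> S) \<and>
     (\<forall>A\<in>Pow {..<n} - S. cube_deg n S A = 0 \<or> odd (cube_deg n S A))"

lemma odd_independent_set_cube_iff:
  "odd_independent_set (Pow {..<n}) (cube_adj n) S \<longleftrightarrow> cube_odd_indep n S"
proof -
  have deg: "card {B\<in>S. cube_adj n A B} = cube_deg n S A" for A
  proof -
    have "{B\<in>S. cube_adj n A B} = (\<lambda>i. flip i A) ` {i. i < n \<and> flip i A \<in> S}"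
      by (auto simp: cube_adj_def)
    moreover have "inj_on (\<lambda>i. flip i A) {i. i < n \<and> flip i A \<in> S}"
      by (auto simp: inj_on_def)
    ultimately show ?thesis
      by (simp add: card_image cube_deg_def)
  qed
  moreover have "(\<forall>A\<in>S. \<forall>B\<in>S. \<not> cube_adj n A B) \<longleftrightarrow> (\<forall>A\<in>S. \<forall>i<n. flip i A \<notin> S)"
    by (auto simp: cube_adj_def)
  ultimately show ?thesis
    by (simp add: odd_independent_set_def independent_set_def cube_odd_indep_def)
qed

lemma finite_Collect_cube_odd_indep: "finite {S. cube_odd_indep n S}"
  by (rule finite_subset[of _ "Pow (Pow {..<n})"]) (auto simp: cube_odd_indep_def)

lemma card_le_alpha_od_cube: "cube_odd_indep n S \<Longrightarrow> card S \<le> alpha_od_cube n"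
  unfolding alpha_od_cube_eq alpha_od_def odd_independent_set_cube_iff
  using finite_Collect_cube_odd_indep by (auto intro: Max_ge)

lemma alpha_od_cube_attained:
  obtains S where "cube_odd_indep n S" "card S = alpha_od_cube n"
proof -
  have "cube_odd_indep n {}"
    by (simp add: cube_odd_indep_def cube_deg_def)
  then have "alpha_od_cube n \<in> card ` {S. cube_odd_indep n S}"
    unfolding alpha_od_cube_eq alpha_od_def odd_independent_set_cube_iff
    using finite_Collect_cube_odd_indep by (intro Max_in) auto
  then show thesis
    using that by auto
qed

lemma alpha_od_cube_le:
  assumes "\<And>S. cube_odd_indep n S \<Longrightarrow> card S \<le> N"
  shows "alpha_od_cube n \<le> N"
proof -
  have "cube_odd_indep n {}"
    by (simp add: cube_odd_indep_def cube_deg_def)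
  then show ?thesis
    unfolding alpha_od_cube_eq alpha_od_def odd_independent_set_cube_iff
    using assms finite_Collect_cube_odd_indep by (subst Max_le_iff) auto
qed

section \<open>Double counting\<close>

lemma sum_card_Collect_swap:
  assumes "finite X" "finite Y"
  shows "(\<Sum>x\<in>X. card {y\<in>Y. P x y}) = (\<Sum>y\<in>Y. card {x\<in>X. P x y})"
proof -
  have "(\<Sum>x\<in>X. card {y\<in>Y. P x y}) = (\<Sum>x\<in>X. \<Sum>y\<in>Y. of_bool (P x y))"
    using assms by (simp add: Int_def)
  also have "\<dots> = (\<Sum>y\<in>Y. \<Sum>x\<in>X. of_bool (P x y))"
    by (rule sum.swap)
  also have "\<dots> = (\<Sum>y\<in>Y. card {x\<in>X. P x y})"
    using assms by (simp add: Int_def)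
  finally show ?thesis .
qed

lemma cube_odd_indep_subset: "cube_odd_indep n S \<Longrightarrow> A \<in> S \<Longrightarrow> A \<subseteq> {..<n}"
  by (auto simp: cube_odd_indep_def)

lemma cube_odd_indep_flip_notin: "cube_odd_indep n S \<Longrightarrow> A \<in> S \<Longrightarrow> i < n \<Longrightarrow> flip i A \<notin> S"
  by (auto simp: cube_odd_indep_def)

lemma cube_odd_indep_deg:
  "cube_odd_indep n S \<Longrightarrow> A \<subseteq> {..<n} \<Longrightarrow> A \<notin> S \<Longrightarrow> cube_deg n S A = 0 \<or> odd (cube_deg n S A)"
  by (auto simp: cube_odd_indep_def)

lemma cube_odd_indep_finite: "cube_odd_indep n S \<Longrightarrow> finite S"
  by (metis cube_odd_indep_def finite_Pow_iff finite_lessThan finite_subset)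

lemma cube_deg_le: "cube_deg n S A \<le> n"
proof -
  have "cube_deg n S A \<le> card {..<n}"
    unfolding cube_deg_def by (rule card_mono) auto
  then show ?thesis
    by simp
qed

lemma cube_deg_eq_0_iff: "cube_deg n S A = 0 \<longleftrightarrow> (\<forall>i<n. flip i A \<notin> S)"
  by (auto simp: cube_deg_def)

lemma sum_cube_deg:
  assumes S: "cube_odd_indep n S"
  shows "(\<Sum>A\<in>Pow {..<n} - S. cube_deg n S A) = n * card S"
proof -
  have "{A\<in>Pow {..<n} - S. flip i A \<in> S} = flip i ` S" if "i < n" for i
  proof (intro equalityI subsetI)
    fix A assume "A \<in> {A\<in>Pow {..<n} - S. flip i A \<in> S}"
    then show "A \<in> flip i ` S"
      by (metis (no_types, lifting) flip_flip image_eqI mem_Collect_eq)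
  next
    fix A assume "A \<in> flip i ` S"
    then obtain B where "B \<in> S" "A = flip i B"
      by blast
    then show "A \<in> {A\<in>Pow {..<n} - S. flip i A \<in> S}"
      using S that cube_odd_indep_flip_notin flip_subset_lessThan[OF cube_odd_indep_subset[OF S]]
      by auto
  qed
  then have "card {A\<in>Pow {..<n} - S. flip i A \<in> S} = card S" if "i < n" for i
    using that by (simp add: card_image inj_on_subset[OF inj_flip])
  then have "(\<Sum>i\<in>{..<n}. card {A\<in>Pow {..<n} - S. flip i A \<in> S}) = n * card S"
    by simp
  then show ?thesis
    unfolding cube_deg_def using sum_card_Collect_swap[of "Pow {..<n} - S" "{..<n}"]
    by (simp add: lessThan_def)
qed

definition free_vertices :: "nat \<Rightarrow> nat set set \<Rightarrow> nat set set" where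
  "free_vertices n S = {A\<in>Pow {..<n} - S. cube_deg n S A = 0}"

lemma mem_free_vertices_iff:
  "u \<in> free_vertices n S \<longleftrightarrow> u \<subseteq> {..<n} \<and> u \<notin> S \<and> (\<forall>i<n. flip i u \<notin> S)"
  by (simp add: free_vertices_def cube_deg_eq_0_iff)

definition full_vertices :: "nat \<Rightarrow> nat set set \<Rightarrow> nat set set" where
  "full_vertices n S = {A\<in>Pow {..<n} - S. cube_deg n S A = n - 1}"

lemma full_vertex_flip_mem:
  assumes A: "A \<in> full_vertices n S" and j: "j < n" "flip j A \<notin> S" and i: "i < n" "i \<noteq> j"
  shows "flip i A \<in> S"
proof -
  have "{i. i < n \<and> flip i A \<in> S} \<subseteq> {..<n} - {j}"
    using j by auto
  moreover have "card {i. i < n \<and> flip i A \<in> S} = card ({..<n} - {j})"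
    using A j by (simp add: full_vertices_def cube_deg_def)
  ultimately have "{i. i < n \<and> flip i A \<in> S} = {..<n} - {j}"
    by (intro card_subset_eq) auto
  then show ?thesis
    using i by auto
qed

lemma full_vertex_has_free_neighbour:
  assumes S: "cube_odd_indep n S" and A: "A \<in> full_vertices n S" and n: "n \<ge> 1"
  obtains j where "j < n" "flip j A \<in> free_vertices n S"
proof -
  have "card {i. i < n \<and> flip i A \<in> S} < card {..<n}"
    using A n by (simp add: full_vertices_def cube_deg_def)
  then have "\<not> {..<n} \<subseteq> {i. i < n \<and> flip i A \<in> S}"
    using card_mono[of "{i. i < n \<and> flip i A \<in> S}" "{..<n}"] by auto
  then obtain j where j: "j < n" "flip j A \<notin> S"
    by auto
  have "flip i (flip j A) \<notin> S" if "i < n" for i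
  proof (cases "i = j")
    case False
    then have "flip i A \<in> S"
      using full_vertex_flip_mem[OF A j that] by simp
    then show ?thesis
      using cube_odd_indep_flip_notin[OF S _ j(1)] by (metis flip_commute)
  qed (use A in \<open>simp add: full_vertices_def\<close>)
  moreover have "flip j A \<subseteq> {..<n}"
    using A j by (simp add: full_vertices_def flip_subset_lessThan)
  ultimately have "flip j A \<in> free_vertices n S"
    using j by (simp add: free_vertices_def cube_deg_eq_0_iff)
  with j show thesis
    using that by blast
qed

lemma card_full_vertices_le:
  assumes S: "cube_odd_indep n S" and n: "n \<ge> 1"
    and c: "\<And>u. u \<in> free_vertices n S \<Longrightarrow> card {j. j < n \<and> flip j u \<in> full_vertices n S} \<le> c"
  shows "card (full_vertices n S) \<le> c * card (free_vertices n S)"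
proof -
  let ?N = "\<lambda>u. (\<lambda>j. flip j u) ` {j. j < n \<and> flip j u \<in> full_vertices n S}"
  have fin: "finite (free_vertices n S)"
    by (simp add: free_vertices_def)
  have "full_vertices n S \<subseteq> (\<Union>u\<in>free_vertices n S. ?N u)"
  proof
    fix A assume A: "A \<in> full_vertices n S"
    then obtain j where "j < n" "flip j A \<in> free_vertices n S"
      using full_vertex_has_free_neighbour[OF S _ n] by blast
    then show "A \<in> (\<Union>u\<in>free_vertices n S. ?N u)"
      using A by (intro UN_I[of "flip j A"]) (auto intro: image_eqI[of _ _ j])
  qed
  then have "card (full_vertices n S) \<le> card (\<Union>u\<in>free_vertices n S. ?N u)"
    using fin by (intro card_mono) auto
  also have "\<dots> \<le> (\<Sum>u\<in>free_vertices n S. card (?N u))"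
    using fin by (rule card_UN_le)
  also have "\<dots> \<le> (\<Sum>u\<in>free_vertices n S. c)"
    using c by (intro sum_mono order.trans[OF card_image_le]) auto
  finally show ?thesis
    by (simp add: mult.commute)
qed

lemma cube_deg_sum_bound:
  assumes S: "cube_odd_indep n S" and n: "even n" "n \<ge> 2"
  shows "int n * card S \<le>
    (int n - 3) * card (Pow {..<n} - S - free_vertices n S) + 2 * card (full_vertices n S)"
proof -
  let ?V = "Pow {..<n} - S"
  \<comment> \<open>an odd degree below the even \<open>n\<close> is \<open>n - 1\<close> or at most \<open>n - 3\<close>\<close>
  have "int (cube_deg n S A) \<le>
      (int n - 3) * of_bool (cube_deg n S A \<noteq> 0) + 2 * of_bool (cube_deg n S A = n - 1)"
    if "A \<in> ?V" for A
  proof -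
    have "cube_deg n S A = 0 \<or> odd (cube_deg n S A)"
      using that cube_odd_indep_deg[OF S] by auto
    moreover have "cube_deg n S A \<le> n"
      by (rule cube_deg_le)
    ultimately have "cube_deg n S A = 0 \<or> cube_deg n S A = n - 1 \<or> cube_deg n S A + 3 \<le> n"
      using n by presburger
    then show ?thesis
      using n by auto
  qed
  then have "(\<Sum>A\<in>?V. int (cube_deg n S A)) \<le>
      (\<Sum>A\<in>?V. (int n - 3) * of_bool (cube_deg n S A \<noteq> 0) + 2 * of_bool (cube_deg n S A = n - 1))"
    by (rule sum_mono)
  also have "\<dots> = (int n - 3) * card (?V \<inter> {A. cube_deg n S A \<noteq> 0}) +
      2 * card (?V \<inter> {A. cube_deg n S A = n - 1})"
    by (simp add: sum.distrib sum_distrib_left[symmetric])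
  also have "?V \<inter> {A. cube_deg n S A \<noteq> 0} = ?V - free_vertices n S"
    by (auto simp: free_vertices_def)
  also have "?V \<inter> {A. cube_deg n S A = n - 1} = full_vertices n S"
    by (auto simp: full_vertices_def)
  finally show ?thesis
    using sum_cube_deg[OF S] by (simp flip: of_nat_sum)
qed

lemma full_vertices_subset:
  "n \<ge> 2 \<Longrightarrow> full_vertices n S \<subseteq> Pow {..<n} - S - free_vertices n S"
  by (auto simp: full_vertices_def free_vertices_def)

lemma card_nonfree_vertices:
  assumes "cube_odd_indep n S"
  shows "card (Pow {..<n} - S - free_vertices n S) + card S + card (free_vertices n S) = 2 ^ n"
proof -
  let ?F = "free_vertices n S"
  have sub: "S \<subseteq> Pow {..<n}" "?F \<subseteq> Pow {..<n} - S"
    using assms by (auto simp: cube_odd_indep_def free_vertices_def)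
  have fin: "finite S" "finite ?F"
    using sub by (auto intro: finite_subset)
  have "card (Pow {..<n}) = card ((Pow {..<n} - S - ?F) \<union> S \<union> ?F)"
    using sub by (intro arg_cong[where f = card]) auto
  also have "\<dots> = card ((Pow {..<n} - S - ?F) \<union> S) + card ?F"
    using fin sub by (intro card_Un_disjoint) auto
  also have "\<dots> = card (Pow {..<n} - S - ?F) + card S + card ?F"
    using fin by (subst card_Un_disjoint) auto
  finally show ?thesis
    by (simp add: card_Pow)
qed

theorem cube_odd_indep_card_le:
  assumes S: "cube_odd_indep n S" and n: "even n" "n \<ge> 2"
  shows "n * card S \<le> (n - 1) * 2 ^ (n - 1)"
proof -
  define s f h N where "s = int (card S)" and "f = int (card (free_vertices n S))"
    and "h = int (card (full_vertices n S))" and "N = int (card (Pow {..<n} - S - free_vertices n S))"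
  have deg: "int n * s \<le> (int n - 3) * N + 2 * h"
    using cube_deg_sum_bound[OF S n] by (simp add: s_def N_def h_def)
  have hN: "h \<le> N"
    using full_vertices_subset[OF n(2), of S] unfolding h_def N_def by (simp add: card_mono)
  have "card (full_vertices n S) \<le> n * card (free_vertices n S)"
    by (rule card_full_vertices_le[OF S]) (use n in \<open>auto intro: order.trans[OF card_mono[of "{..<n}"]]\<close>)
  then have hf: "h \<le> int n * f"
    unfolding h_def f_def by (metis of_nat_le_iff of_nat_mult)
  have N: "N = 2 ^ n - s - f"
    using arg_cong[OF card_nonfree_vertices[OF S], of int] by (simp add: N_def s_def f_def)
  \<comment> \<open>weights of an optimal dual solution: equality needs \<open>h = N = n f\<close>\<close>
  have "int n * (int n + 1) * s \<le> (int n + 1) * ((int n - 3) * N + 2 * h)"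
    using deg by (simp add: mult.assoc mult_left_mono)
  also have "\<dots> \<le> (int n + 1) * (int n - 3) * N + (int n + 3) * N + (int n - 1) * (int n * f)"
    using mult_left_mono[OF hN, of "int n + 3"] mult_left_mono[OF hf, of "int n - 1"] n
    by (simp add: algebra_simps)
  also have "\<dots> = int n * (int n - 1) * (N + f)"
    by (simp add: algebra_simps)
  finally have "int n * (int n + 1) * s \<le> int n * (int n - 1) * (N + f)" .
  then have "(int n + 1) * s \<le> (int n - 1) * (2 ^ n - s)"
    using n by (simp add: N mult.assoc)
  then have "int (2 * (n * card S)) \<le> int ((n - 1) * 2 ^ n)"
    using n by (simp add: s_def of_nat_diff algebra_simps)
  moreover have "(2 :: nat) ^ n = 2 * 2 ^ (n - 1)"
    using n by (cases n) simp_all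
  ultimately have "2 * (n * card S) \<le> 2 * ((n - 1) * 2 ^ (n - 1))"
    by (metis of_nat_le_iff mult.left_commute)
  then show ?thesis
    by simp
qed

section \<open>Translations\<close>

lemma sym_diff_sym_diff_cancel [simp]: "sym_diff u (sym_diff u A) = A"
  by auto

lemma inj_sym_diff: "inj (sym_diff u)"
  by (rule inj_on_inverseI[where g = "sym_diff u"]) simp

lemma mem_sym_diff_image_iff: "A \<in> sym_diff u ` S \<longleftrightarrow> sym_diff u A \<in> S"
proof
  assume "A \<in> sym_diff u ` S"
  then show "sym_diff u A \<in> S"
    by auto
next
  assume "sym_diff u A \<in> S"
  then have "sym_diff u (sym_diff u A) \<in> sym_diff u ` S"
    by (rule imageI)
  then show "A \<in> sym_diff u ` S"
    by simp
qed

lemma cube_deg_sym_diff_image: "cube_deg n (sym_diff u ` S) A = cube_deg n S (sym_diff u A)"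
  unfolding cube_deg_def mem_sym_diff_image_iff sym_diff_flip ..

lemma cube_odd_indep_sym_diff_image:
  assumes S: "cube_odd_indep n S" and u: "u \<subseteq> {..<n}"
  shows "cube_odd_indep n (sym_diff u ` S)"
  unfolding cube_odd_indep_def
proof (intro conjI ballI allI impI)
  show "sym_diff u ` S \<subseteq> Pow {..<n}"
    using u cube_odd_indep_subset[OF S] by fastforce
next
  fix A i assume "A \<in> sym_diff u ` S" "i < n"
  then show "flip i A \<notin> sym_diff u ` S"
    using cube_odd_indep_flip_notin[OF S] by (simp add: mem_sym_diff_image_iff sym_diff_flip)
next
  fix A assume "A \<in> Pow {..<n} - sym_diff u ` S"
  then have "sym_diff u A \<in> Pow {..<n} - S"
    using u by (auto simp: mem_sym_diff_image_iff)
  then show "cube_deg n (sym_diff u ` S) A = 0 \<or> odd (cube_deg n (sym_diff u ` S) A)"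
    using cube_odd_indep_deg[OF S] by (simp add: cube_deg_sym_diff_image)
qed

lemma card_sym_diff_image: "card (sym_diff u ` S) = card S"
  by (simp add: card_image inj_on_subset[OF inj_sym_diff])

section \<open>The upper bound for the 6-cube\<close>

lemma free_vertex_neighbours_full:
  assumes S: "cube_odd_indep n S" and n: "even n" "n \<ge> 4"
    and u: "u \<in> free_vertices n S"
    and many: "card {j. j < n \<and> flip j u \<in> full_vertices n S} \<ge> n - 2"
    and a: "a < n"
  shows "flip a u \<in> full_vertices n S"
proof (rule ccontr)
  assume not_full: "flip a u \<notin> full_vertices n S"
  let ?t = "flip a u"
  let ?I = "{i. i < n \<and> flip i ?t \<in> S}"
  have uU: "u \<subseteq> {..<n}" and uS: "u \<notin> S" and nbrs: "\<And>i. i < n \<Longrightarrow> flip i u \<notin> S"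
    using u by (simp_all add: mem_free_vertices_iff)
  have t: "?t \<subseteq> {..<n}" "?t \<notin> S"
    using flip_subset_lessThan[OF uU a] nbrs[OF a] by auto
  have "{j. j < n \<and> flip j u \<in> full_vertices n S} \<subseteq> ?I"
  proof safe
    fix j assume j: "j < n" "flip j u \<in> full_vertices n S"
    then have "j \<noteq> a"
      using not_full by auto
    then have "flip a (flip j u) \<in> S"
      using full_vertex_flip_mem[OF j(2) j(1) _ a] uS by simp
    then show "flip j ?t \<in> S"
      by (simp add: flip_commute)
  qed
  then have "card {j. j < n \<and> flip j u \<in> full_vertices n S} \<le> cube_deg n S ?t"
    unfolding cube_deg_def by (intro card_mono) auto
  then have lower: "n - 2 \<le> cube_deg n S ?t"
    using many by linarith
  have "?I \<subseteq> {..<n} - {a}"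
    using uS by auto
  then have "cube_deg n S ?t \<le> card ({..<n} - {a})"
    unfolding cube_deg_def by (intro card_mono) auto
  with a have upper: "cube_deg n S ?t \<le> n - 1"
    by simp
  have "cube_deg n S ?t = n - 1"
    using lower upper cube_odd_indep_deg[OF S t] n by presburger
  then show False
    using not_full t by (simp add: full_vertices_def)
qed

lemma second_neighbour_mem:
  assumes "u \<notin> S" and full: "\<And>c. c < n \<Longrightarrow> flip c u \<in> full_vertices n S"
    and "a < n" "b < n" "a \<noteq> b"
  shows "flip a (flip b u) \<in> S"
  using full_vertex_flip_mem[OF full[of b], of b a] assms by simp

lemma triangle_parity_cut:
  assumes sym: "\<And>x y. R x y \<longleftrightarrow> R y x"
    and tri: "\<And>a b c. a \<in> V \<Longrightarrow> b \<in> V \<Longrightarrow> c \<in> V \<Longrightarrow> a \<noteq> b \<Longrightarrow> b \<noteq> c \<Longrightarrow> a \<noteq> c \<Longrightarrow>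
                R b c \<longleftrightarrow> (R a b \<noteq> R a c)"
    and "x0 \<in> V" "x \<in> V" "y \<in> V" "x \<noteq> y"
  shows "R x y \<longleftrightarrow> ((x \<noteq> x0 \<and> R x0 x) \<longleftrightarrow> \<not> (y \<noteq> x0 \<and> R x0 y))"
  using assms(3-) tri[of x0 x y] sym[of x y] sym[of x0 x] by (cases "x = x0"; cases "y = x0") auto

locale cube6_with_pairs =
  fixes S :: "nat set set"
  assumes odd_indep: "cube_odd_indep 6 S"
    and empty_notin: "{} \<notin> S"
    and pairs_mem: "\<And>B. B \<subseteq> {..<6} \<Longrightarrow> card B = 2 \<Longrightarrow> B \<in> S"
begin

\<comment> \<open>otherwise the simplifier unfolds \<open>{..<6}\<close> into \<open>{0, 1, 2, 3, 4, 5}\<close>\<close>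
declare lessThan_nat_numeral [simp del]

lemma subset_of_mem: "A \<in> S \<Longrightarrow> A \<subseteq> {..<6}"
  using cube_odd_indep_subset[OF odd_indep] .

lemma card_mem:
  assumes A: "A \<in> S"
  shows "card A \<in> {2, 4, 5, 6}"
proof -
  have AU: "A \<subseteq> {..<6}"
    using subset_of_mem[OF A] .
  then have fin: "finite A" and le: "card A \<le> 6"
    using finite_subset card_mono[OF _ AU] by auto
  have "card A \<noteq> 0"
    using A empty_notin fin by auto
  moreover have "card A \<noteq> 1"
  proof
    assume "card A = 1"
    then obtain x where x: "A = {x}"
      by (auto simp: card_1_singleton_iff)
    define y where "y = (if x = 0 then 1 else (0::nat))"
    have "flip y A = {y, x}" "y < 6" "y \<noteq> x"
      by (auto simp: x y_def flip_def)
    then show False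
      using cube_odd_indep_flip_notin[OF odd_indep A, of y] pairs_mem[of "{y, x}"] AU x by auto
  qed
  moreover have "card A \<noteq> 3"
  proof
    assume c: "card A = 3"
    then obtain x where x: "x \<in> A"
      by fastforce
    then have "flip x A = A - {x}" "x < 6"
      using AU by (auto simp: flip_def)
    then show False
      using cube_odd_indep_flip_notin[OF odd_indep A, of x] pairs_mem[of "A - {x}"] AU c x by auto
  qed
  ultimately show ?thesis
    using le by auto
qed

lemma triangle_parity:
  assumes abc: "a < 6" "b < 6" "c < 6" "a \<noteq> b" "b \<noteq> c" "a \<noteq> c"
  shows "{..<6} - {b, c} \<in> S \<longleftrightarrow> (({..<6} - {a, b} \<in> S) \<noteq> ({..<6} - {a, c} \<in> S))"
proof -
  define C where "C = {..<6} - {a, b, c}"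
  let ?P = "\<lambda>i. flip i C \<in> S"
  have CU: "C \<subseteq> {..<6}" and fin: "finite C"
    by (auto simp: C_def)
  have "card C = 3"
    using abc by (simp add: C_def card_Diff_subset)
  then have "C \<notin> S"
    using card_mem by fastforce
  have "?P i" if "i \<in> C" for i
  proof -
    have "flip i C = C - {i}"
      using that by (auto simp: flip_def)
    then show ?thesis
      using pairs_mem[of "C - {i}"] \<open>card C = 3\<close> that CU by auto
  qed
  then have "{i. i < 6 \<and> ?P i} = C \<union> {i\<in>{a, b, c}. ?P i}"
    using abc by (auto simp: C_def)
  moreover have "C \<inter> {i\<in>{a, b, c}. ?P i} = {}"
    by (auto simp: C_def)
  ultimately have "cube_deg 6 S C = card C + card {i\<in>{a, b, c}. ?P i}"
    unfolding cube_deg_def using fin by (simp add: card_Un_disjoint)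
  then have "even (card {i\<in>{a, b, c}. ?P i})"
    using cube_odd_indep_deg[OF odd_indep CU \<open>C \<notin> S\<close>] \<open>card C = 3\<close> by auto
  moreover have "{i\<in>{a, b, c}. ?P i} =
      (if ?P a then {a} else {}) \<union> (if ?P b then {b} else {}) \<union> (if ?P c then {c} else {})"
    by auto
  moreover have "flip a C = {..<6} - {b, c}" "flip b C = {..<6} - {a, c}" "flip c C = {..<6} - {a, b}"
    using abc by (auto simp: C_def flip_def)
  ultimately show ?thesis
    using abc by (cases "?P a"; cases "?P b"; cases "?P c") (auto simp: insert_commute)
qed

text \<open>By \<open>triangle_parity\<close>, the pairs whose complements lie in \<open>S\<close> are the edges of a
complete bipartite graph on \<open>{..<6}\<close>; \<open>side\<close> is the part not containing 0.\<close>

definition side :: "nat set" where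
  "side = {x. 0 < x \<and> x < 6 \<and> {..<6} - {0, x} \<in> S}"

lemma side_subset: "side \<subseteq> {..<6}"
  by (auto simp: side_def)

lemma complement_pair_mem_iff:
  assumes "x < 6" "y < 6" "x \<noteq> y"
  shows "{..<6} - {x, y} \<in> S \<longleftrightarrow> (x \<in> side \<longleftrightarrow> y \<notin> side)"
proof -
  have "{..<6} - {x, y} \<in> S \<longleftrightarrow>
      ((x \<noteq> 0 \<and> {..<6} - {0, x} \<in> S) \<longleftrightarrow> \<not> (y \<noteq> 0 \<and> {..<6} - {0, y} \<in> S))"
  proof (rule triangle_parity_cut[where R = "\<lambda>x y. {..<6} - {x, y} \<in> S" and V = "{..<6}"])
    show "({..<6} - {x, y} \<in> S) = ({..<6} - {y, x} \<in> S)" for x y :: nat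
      by (simp add: insert_commute)
    show "({..<6} - {b, c} \<in> S) = (({..<6} - {a, b} \<in> S) \<noteq> ({..<6} - {a, c} \<in> S))"
      if "a \<in> {..<6}" "b \<in> {..<6}" "c \<in> {..<6}" "a \<noteq> b" "b \<noteq> c" "a \<noteq> c" for a b c :: nat
      using that by (intro triangle_parity) auto
  qed (use assms in simp_all)
  then show ?thesis
    using assms by (simp add: side_def)
qed

lemma layer4_subset:
  "{A\<in>S. card A = 4} \<subseteq> (\<lambda>(x, y). {..<6} - {x, y}) ` (side \<times> ({..<6} - side))"
proof safe
  fix A assume A: "A \<in> S" "card A = 4"
  then have AU: "A \<subseteq> {..<6}"
    using subset_of_mem by blast
  then have "card ({..<6} - A) = 2"
    using A by (simp add: card_Diff_subset finite_subset)
  then obtain x y where xy: "{..<6} - A = {x, y}" "x \<noteq> y"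
    by (auto simp: card_2_iff)
  then have x: "x < 6" "y < 6" and A_eq: "A = {..<6} - {x, y}"
    using AU by auto
  then have "x \<in> side \<longleftrightarrow> y \<notin> side"
    using complement_pair_mem_iff xy A by simp
  then consider "(x, y) \<in> side \<times> ({..<6} - side)" | "(y, x) \<in> side \<times> ({..<6} - side)"
    using x by auto
  then show "A \<in> (\<lambda>(x, y). {..<6} - {x, y}) ` (side \<times> ({..<6} - side))"
  proof cases
    case 1
    then show ?thesis
      using A_eq by (intro image_eqI[of _ _ "(x, y)"]) auto
  next
    case 2
    then show ?thesis
      using A_eq by (intro image_eqI[of _ _ "(y, x)"]) auto
  qed
qed

lemma card_layer4_le: "card {A\<in>S. card A = 4} \<le> card side * (6 - card side)"
proof -
  have fin: "finite (side \<times> ({..<6} - side))"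
    using finite_subset[OF side_subset] by blast
  have "card {A\<in>S. card A = 4} \<le> card ((\<lambda>(x, y). {..<6} - {x, y}) ` (side \<times> ({..<6} - side)))"
    using fin by (intro card_mono layer4_subset) simp
  also have "\<dots> \<le> card (side \<times> ({..<6} - side))"
    using fin by (rule card_image_le)
  also have "\<dots> = card side * (6 - card side)"
    using side_subset by (simp add: card_cartesian_product card_Diff_subset finite_subset)
  finally show ?thesis .
qed

lemma layer5_subset: "{A\<in>S. card A = 5} \<subseteq> (\<lambda>x. {..<6} - {x}) ` {..<6}"
proof safe
  fix A assume A: "A \<in> S" "card A = 5"
  then have AU: "A \<subseteq> {..<6}"
    using subset_of_mem by blast
  then have "card ({..<6} - A) = 1"
    using A by (simp add: card_Diff_subset finite_subset)
  then obtain x where "{..<6} - A = {x}"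
    by (auto simp: card_1_singleton_iff)
  then show "A \<in> (\<lambda>x. {..<6} - {x}) ` {..<6}"
    using AU by (intro image_eqI[of _ _ x]) auto
qed

lemma card_layer5_le: "card {A\<in>S. card A = 5} \<le> 6"
proof -
  have "card {A\<in>S. card A = 5} \<le> card ((\<lambda>x. {..<6} - {x}) ` {..<6::nat})"
    by (intro card_mono layer5_subset) simp
  also have "\<dots> \<le> 6"
    using card_image_le[of "{..<6::nat}"] by simp
  finally show ?thesis .
qed

lemma layer6_subset: "{A\<in>S. card A = 6} \<subseteq> {{..<6}}"
proof
  fix A assume "A \<in> {A\<in>S. card A = 6}"
  then show "A \<in> {{..<6}}"
    using card_subset_eq[OF finite_lessThan subset_of_mem] by simp
qed

lemma layer5_memD:
  assumes "{..<6} - {x} \<in> S" "x < 6"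
  shows "side = {}" "{..<6} \<notin> S"
proof -
  have "{..<6} - {x, y} \<notin> S" if "y < 6" "y \<noteq> x" for y
  proof -
    have "flip y ({..<6} - {x}) = {..<6} - {x, y}"
      using that by (auto simp: flip_def)
    then show ?thesis
      using cube_odd_indep_flip_notin[OF odd_indep assms(1) \<open>y < 6\<close>] by simp
  qed
  then have same: "x \<in> side \<longleftrightarrow> y \<in> side" if "y < 6" "y \<noteq> x" for y
    using complement_pair_mem_iff[of x y] assms(2) that by auto
  have "x \<notin> side"
    using same[of 0] by (cases "x = 0") (auto simp: side_def)
  then show "side = {}"
    using same side_subset by blast
  have "flip x ({..<6} - {x}) = {..<6}"
    using assms(2) by (auto simp: flip_def)
  then show "{..<6} \<notin> S"
    using cube_odd_indep_flip_notin[OF odd_indep assms] by simp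
qed

lemma even_card_side_if_top_mem:
  assumes "{..<6} \<in> S"
  shows "even (card side)"
proof -
  let ?D = "{..<6} - {0::nat}"
  have top: "flip 0 ?D = {..<6}"
    by (auto simp: flip_def)
  then have "?D \<notin> S"
    using cube_odd_indep_flip_notin[OF odd_indep, of ?D 0] assms by auto
  have "flip i ?D = {..<6} - {0, i}" if "0 < i" "i < 6" for i
    using that by (auto simp: flip_def)
  then have "{i. i < 6 \<and> flip i ?D \<in> S} = insert 0 side"
    using top assms by (auto simp: side_def)
  moreover have "0 \<notin> side"
    by (simp add: side_def)
  ultimately have "cube_deg 6 S ?D = Suc (card side)"
    unfolding cube_deg_def using finite_subset[OF side_subset] by simp
  then show ?thesis
    using cube_odd_indep_deg[OF odd_indep _ \<open>?D \<notin> S\<close>] by auto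
qed

lemma card_le_24: "card S \<le> 24"
proof -
  define L where "L j = {A\<in>S. card A = j}" for j
  let ?P = "{B. B \<subseteq> {..<6::nat} \<and> card B = 2}"
  have fin: "finite ?P" "finite (L j)" for j
    using cube_odd_indep_finite[OF odd_indep] by (auto simp: L_def)
  have "S \<subseteq> ?P \<union> L 4 \<union> L 5 \<union> L 6"
    using card_mem subset_of_mem by (auto simp: L_def)
  then have "card S \<le> card (?P \<union> L 4 \<union> L 5 \<union> L 6)"
    using fin by (intro card_mono) auto
  also have "\<dots> \<le> card ?P + card (L 4) + card (L 5) + card (L 6)"
    by (meson add_le_mono card_Un_le le_refl order_trans)
  also have "card ?P = 15"
    using n_subsets[of "{..<6::nat}" 2] by (simp add: numeral_eq_Suc)
  finally have total: "card S \<le> 15 + card (L 4) + card (L 5) + card (L 6)"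
    by simp
  have L4: "card (L 4) \<le> card side * (6 - card side)"
    unfolding L_def by (rule card_layer4_le)
  have L5: "card (L 5) \<le> 6"
    unfolding L_def by (rule card_layer5_le)
  have L6: "L 6 \<subseteq> {{..<6}}"
    unfolding L_def by (rule layer6_subset)
  have "card side \<le> 6"
    using card_mono[OF _ side_subset] by simp
  then have k: "card side \<in> {0, 1, 2, 3, 4, 5, 6}"
    by auto
  show ?thesis
  proof (cases "L 5 = {}")
    case False
    then obtain A where "A \<in> L 5"
      by blast
    then have "A \<in> (\<lambda>x. {..<6} - {x}) ` {..<6}" "A \<in> S"
      using layer5_subset by (auto simp: L_def)
    then obtain x where "x < 6" "{..<6} - {x} \<in> S"
      by blast
    then have "side = {}" "{..<6} \<notin> S"
      using layer5_memD by auto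
    moreover have "L 6 = {}"
      using L6 calculation(2) by (auto simp: L_def)
    ultimately show ?thesis
      using total L4 L5 by simp
  next
    case True
    show ?thesis
    proof (cases "{..<6} \<in> S")
      case True
      then have "card side * (6 - card side) \<le> 8"
        using even_card_side_if_top_mem k by auto
      moreover have "card (L 6) \<le> 1"
        using card_mono[OF _ L6] by simp
      ultimately show ?thesis
        using total L4 \<open>L 5 = {}\<close> by simp
    next
      case False
      then have "L 6 = {}"
        using L6 by (auto simp: L_def)
      moreover have "card side * (6 - card side) \<le> 9"
        using k by auto
      ultimately show ?thesis
        using total L4 \<open>L 5 = {}\<close> by simp
    qed
  qed
qed

end

theorem cube_odd_indep_6_card_le:
  assumes S: "cube_odd_indep 6 S"
  shows "card S \<le> 24"
proof (cases "\<forall>u\<in>free_vertices 6 S. card {j. j < 6 \<and> flip j u \<in> full_vertices 6 S} \<le> 3")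
  case True
  have "card (full_vertices 6 S) \<le> 3 * card (free_vertices 6 S)"
    by (rule card_full_vertices_le[OF S]) (use True in auto)
  moreover have "card (full_vertices 6 S) \<le> card (Pow {..<6} - S - free_vertices 6 S)"
    by (intro card_mono full_vertices_subset) auto
  ultimately show ?thesis
    using cube_deg_sum_bound[OF S] card_nonfree_vertices[OF S] by simp
next
  case False
  then obtain u where u: "u \<in> free_vertices 6 S"
    and many: "card {j. j < 6 \<and> flip j u \<in> full_vertices 6 S} \<ge> 4"
    by auto
  have uU: "u \<subseteq> {..<6}" and uS: "u \<notin> S"
    using u by (auto simp: mem_free_vertices_iff)
  have full: "flip a u \<in> full_vertices 6 S" if "a < 6" for a
    using free_vertex_neighbours_full[OF S _ _ u _ that] many by simp
  interpret cube6_with_pairs "sym_diff u ` S"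
  proof
    show "cube_odd_indep 6 (sym_diff u ` S)"
      by (rule cube_odd_indep_sym_diff_image[OF S uU])
    show "{} \<notin> sym_diff u ` S"
      using uS by (simp add: mem_sym_diff_image_iff)
  next
    fix B :: "nat set" assume "B \<subseteq> {..<6}" "card B = 2"
    then obtain a b where ab: "B = {a, b}" "a \<noteq> b" "a < 6" "b < 6"
      by (auto simp: card_2_iff)
    then have "sym_diff u B = flip a (flip b u)"
      by (auto simp: flip_def)
    then show "B \<in> sym_diff u ` S"
      using second_neighbour_mem[OF uS full] ab by (simp add: mem_sym_diff_image_iff)
  qed
  show ?thesis
    using card_le_24 by (simp add: card_sym_diff_image)
qed

section \<open>Vector-sum families\<close>

lemma two_mult_card_odd_subsets:
  assumes "finite X" "X \<noteq> {}"
  shows "2 * card {A. A \<subseteq> X \<and> odd (card A)} = 2 ^ card X"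
proof -
  have "card {A. A \<subseteq> X \<and> even (card A)} = card {A. A \<subseteq> X \<and> odd (card A)}"
    using card_subsupersets_even_odd[of X "{}"] assms by auto
  moreover have "Pow X = {A. A \<subseteq> X \<and> even (card A)} \<union> {A. A \<subseteq> X \<and> odd (card A)}"
    by auto
  moreover have "card ({A. A \<subseteq> X \<and> even (card A)} \<union> {A. A \<subseteq> X \<and> odd (card A)}) =
      card {A. A \<subseteq> X \<and> even (card A)} + card {A. A \<subseteq> X \<and> odd (card A)}"
    using assms(1) by (intro card_Un_disjoint) auto
  ultimately have "card (Pow X) = 2 * card {A. A \<subseteq> X \<and> odd (card A)}"
    by simp
  then show ?thesis
    using assms(1) by (simp add: card_Pow)
qed

global_interpretation xor_set: comm_monoid_set "xor :: nat \<Rightarrow> nat \<Rightarrow> nat" 0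
  by unfold_locales (auto simp: ac_simps)

definition xor_sum :: "nat set \<Rightarrow> nat" where
  "xor_sum A = xor_set.F id A"

lemma xor_eq_0_iff: "xor (a :: nat) b = 0 \<longleftrightarrow> a = b"
  by (metis xor.assoc xor.left_neutral xor_self_eq)

lemma xor_less_power: "(a :: nat) < 2 ^ r \<Longrightarrow> b < 2 ^ r \<Longrightarrow> xor a b < 2 ^ r"
  by (metis take_bit_nat_eq_self_iff take_bit_xor)

lemma xor_sum_flip: "finite A \<Longrightarrow> xor_sum (flip i A) = xor i (xor_sum A)"
proof (cases "i \<in> A")
  case True
  moreover assume "finite A"
  ultimately have "xor_sum A = xor i (xor_sum (A - {i}))"
    unfolding xor_sum_def by (simp add: xor_set.remove)
  then show ?thesis
    using True by (simp add: flip_def xor.assoc[symmetric])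
next
  case False
  moreover assume "finite A"
  ultimately show ?thesis
    by (simp add: flip_def xor_sum_def)
qed

lemma xor_sum_less_power: "A \<subseteq> {..<2 ^ r} \<Longrightarrow> xor_sum A < 2 ^ r"
proof (induction A rule: infinite_finite_induct)
  case (insert x A)
  then show ?case
    by (simp add: xor_sum_def xor_less_power)
qed (simp_all add: xor_sum_def)

text \<open>A coordinate \<open>i < 2\<^sup>r\<close> is read as the vector of \<open>GF(2)\<^sup>r\<close> given by its binary digits, and
\<open>xor_sum A\<close> is the sum of the vectors in \<open>A\<close>.\<close>

definition hamming_family :: "nat \<Rightarrow> nat set set" where
  "hamming_family r = {A. A \<subseteq> {..<2 ^ r} \<and> even (card A) \<and> xor_sum A \<noteq> 0}"

lemma cube_deg_hamming_family:
  assumes A: "A \<subseteq> {..<2 ^ r}"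
  shows "cube_deg (2 ^ r) (hamming_family r) A = (if odd (card A) then 2 ^ r - 1 else 0)"
proof -
  have fin: "finite A"
    using A finite_subset by blast
  have flip_mem: "flip i A \<in> hamming_family r \<longleftrightarrow> odd (card A) \<and> i \<noteq> xor_sum A" if "i < 2 ^ r" for i
  proof -
    have "xor_sum (flip i A) \<noteq> 0 \<longleftrightarrow> i \<noteq> xor_sum A"
      using fin by (simp add: xor_sum_flip xor_eq_0_iff)
    then show ?thesis
      using flip_subset_lessThan[OF A that] fin by (simp add: hamming_family_def even_card_flip_iff)
  qed
  show ?thesis
  proof (cases "odd (card A)")
    case True
    then have "{i. i < 2 ^ r \<and> flip i A \<in> hamming_family r} = {..<2 ^ r} - {xor_sum A}"
      using flip_mem by auto
    then show ?thesis
      using True xor_sum_less_power[OF A] by (simp add: cube_deg_def)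
  next
    case False
    then show ?thesis
      using flip_mem by (simp add: cube_deg_def)
  qed
qed

lemma cube_odd_indep_hamming_family: "cube_odd_indep (2 ^ r) (hamming_family r)"
  unfolding cube_odd_indep_def
proof (intro conjI ballI allI impI)
  show "hamming_family r \<subseteq> Pow {..<2 ^ r}"
    by (auto simp: hamming_family_def)
next
  fix A and i :: nat assume "A \<in> hamming_family r" "i < 2 ^ r"
  then show "flip i A \<notin> hamming_family r"
    by (auto simp: hamming_family_def even_card_flip_iff finite_subset)
next
  fix A assume "A \<in> Pow {..<2 ^ r} - hamming_family r"
  moreover have "(2 :: nat) ^ r - 1 = 0 \<or> odd ((2 :: nat) ^ r - 1)"
    by (cases r) simp_all
  ultimately show "cube_deg (2 ^ r) (hamming_family r) A = 0 \<or> odd (cube_deg (2 ^ r) (hamming_family r) A)"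
    by (simp add: cube_deg_hamming_family)
qed

lemma card_hamming_family: "2 ^ r * card (hamming_family r) = (2 ^ r - 1) * 2 ^ (2 ^ r - 1)"
proof -
  let ?H = "hamming_family r" and ?V = "Pow {..<2 ^ r} - hamming_family r"
  let ?O = "{A. A \<subseteq> {..<(2 :: nat) ^ r} \<and> odd (card A)}"
  have "2 ^ r * card ?H = (\<Sum>A\<in>?V. cube_deg (2 ^ r) ?H A)"
    using sum_cube_deg[OF cube_odd_indep_hamming_family] by simp
  also have "\<dots> = (\<Sum>A\<in>?V. (2 ^ r - 1) * of_bool (odd (card A)))"
    by (intro sum.cong) (auto simp: cube_deg_hamming_family)
  also have "\<dots> = (2 ^ r - 1) * card (?V \<inter> {A. odd (card A)})"
    by (simp add: sum_distrib_left[symmetric])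
  also have "?V \<inter> {A. odd (card A)} = ?O"
    by (auto simp: hamming_family_def)
  finally have "2 ^ r * card ?H = (2 ^ r - 1) * card ?O" .
  moreover have "2 * card ?O = 2 ^ 2 ^ r"
    using two_mult_card_odd_subsets[of "{..<(2 :: nat) ^ r}"] by (simp add: lessThan_empty_iff)
  moreover have "(2 :: nat) ^ 2 ^ r = 2 * 2 ^ (2 ^ r - 1)"
    by (cases "2 ^ r :: nat") simp_all
  ultimately show ?thesis
    by simp
qed

section \<open>Families split at the middle layer\<close>

definition middle_split :: "nat \<Rightarrow> nat set set" where
  "middle_split k = {A. A \<subseteq> {..<4 * k} \<and> odd (card A) \<and>
     (if 4 * k - 1 \<in> A then 2 * k < card A else card A < 2 * k)}"

text \<open>Complementation in \<open>{..<4 k}\<close> exchanges the two parts of the family; this halves both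
the degree computation and the count.\<close>

lemma sym_diff_mem_middle_split_iff:
  assumes k: "k \<ge> 1" and A: "A \<subseteq> {..<4 * k}"
  shows "sym_diff {..<4 * k} A \<in> middle_split k \<longleftrightarrow> A \<in> middle_split k"
proof -
  have eq: "sym_diff {..<4 * k} A = {..<4 * k} - A"
    using A by auto
  have "card A \<le> 4 * k"
    using card_mono[OF _ A] by simp
  moreover have "card ({..<4 * k} - A) = 4 * k - card A"
    using A by (simp add: card_Diff_subset finite_subset)
  moreover have "4 * k - 1 \<in> {..<4 * k} - A \<longleftrightarrow> 4 * k - 1 \<notin> A"
    using k by auto
  ultimately show ?thesis
    using A unfolding eq middle_split_def by auto
qed

lemma sym_diff_image_middle_split:
  assumes "k \<ge> 1"
  shows "sym_diff {..<4 * k} ` middle_split k = middle_split k"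
proof (rule set_eqI)
  fix B
  show "B \<in> sym_diff {..<4 * k} ` middle_split k \<longleftrightarrow> B \<in> middle_split k"
  proof (cases "B \<subseteq> {..<4 * k}")
    case True
    then show ?thesis
      using sym_diff_mem_middle_split_iff[OF assms True] by (simp add: mem_sym_diff_image_iff)
  next
    case False
    then have "\<not> sym_diff {..<4 * k} B \<subseteq> {..<4 * k}"
      by auto
    with False show ?thesis
      by (simp add: mem_sym_diff_image_iff middle_split_def)
  qed
qed

lemma flip_mem_middle_split_iff:
  assumes k: "k \<ge> 1" and A: "A \<subseteq> {..<4 * k}" "4 * k - 1 \<notin> A" "even (card A)" and i: "i < 4 * k"
  shows "flip i A \<in> middle_split k \<longleftrightarrow>
    (if i = 4 * k - 1 then 2 * k \<le> card A else if i \<in> A then card A \<le> 2 * k else card A + 2 \<le> 2 * k)"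
proof -
  have fin: "finite A"
    using A(1) finite_subset by blast
  have "flip i A \<subseteq> {..<4 * k}" "odd (card (flip i A))"
    using flip_subset_lessThan[OF A(1) i] fin A(3) by (auto simp: even_card_flip_iff)
  moreover have "4 * k - 1 \<in> flip i A \<longleftrightarrow> i = 4 * k - 1"
    using A(2) by (auto simp: mem_flip_iff)
  moreover have "card (flip i A) = (if i \<in> A then card A - 1 else Suc (card A))"
    using fin by (rule card_flip)
  moreover have "i \<in> A \<Longrightarrow> card A > 0"
    using fin by (auto simp: card_gt_0_iff)
  ultimately show ?thesis
    using A(2,3) unfolding middle_split_def by auto
qed

lemma odd_cube_deg_middle_split:
  assumes k: "k \<ge> 1" and A: "A \<subseteq> {..<4 * k}" "4 * k - 1 \<notin> A" "even (card A)"
  shows "odd (cube_deg (4 * k) (middle_split k) A)"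
proof -
  let ?l = "4 * k - 1"
  let ?I = "{i. i < 4 * k \<and> flip i A \<in> middle_split k}"
  have mem: "i \<in> ?I \<longleftrightarrow> i < 4 * k \<and>
      (if i = ?l then 2 * k \<le> card A else if i \<in> A then card A \<le> 2 * k else card A + 2 \<le> 2 * k)" for i
    using flip_mem_middle_split_iff[OF k A] by auto
  have "card A + 2 \<le> 2 * k \<or> card A = 2 * k \<or> 2 * k < card A"
    using A(3) by presburger
  then consider "card A + 2 \<le> 2 * k" | "card A = 2 * k" | "2 * k < card A"
    by blast
  then show ?thesis
  proof cases
    case 1
    then have "?I = {..<4 * k} - {?l}"
      using mem by auto
    then show ?thesis
      using k by (simp add: cube_deg_def)
  next
    case 2
    then have "?I = insert ?l A"
      using mem A(1) k by auto
    then show ?thesis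
      using 2 A(2) finite_subset[OF A(1)] by (simp add: cube_deg_def)
  next
    case 3
    then have "?I = {?l}"
      using mem k by auto
    then show ?thesis
      by (simp add: cube_deg_def)
  qed
qed

lemma cube_odd_indep_middle_split:
  assumes k: "k \<ge> 1"
  shows "cube_odd_indep (4 * k) (middle_split k)"
  unfolding cube_odd_indep_def
proof (intro conjI ballI allI impI)
  show "middle_split k \<subseteq> Pow {..<4 * k}"
    by (auto simp: middle_split_def)
next
  fix A and i :: nat assume "A \<in> middle_split k" "i < 4 * k"
  then show "flip i A \<notin> middle_split k"
    by (auto simp: middle_split_def even_card_flip_iff finite_subset)
next
  fix A assume A: "A \<in> Pow {..<4 * k} - middle_split k"
  let ?U = "{..<4 * k}"
  show "cube_deg (4 * k) (middle_split k) A = 0 \<or> odd (cube_deg (4 * k) (middle_split k) A)"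
  proof (cases "even (card A)")
    case False
    then have "flip i A \<notin> middle_split k" for i
      using A by (auto simp: middle_split_def even_card_flip_iff finite_subset)
    then show ?thesis
      by (simp add: cube_deg_def)
  next
    case True
    show ?thesis
    proof (cases "4 * k - 1 \<in> A")
      case False
      then show ?thesis
        using odd_cube_deg_middle_split[OF k _ False True] A by auto
    next
      case top: True
      have "sym_diff ?U A = ?U - A"
        using A by auto
      moreover have "A \<subseteq> ?U"
        using A by simp
      ultimately have "card (sym_diff ?U A) = 4 * k - card A"
        by (simp add: card_Diff_subset finite_subset)
      moreover have "card A \<le> 4 * k"
        using A card_mono[of ?U A] by auto
      ultimately have "even (card (sym_diff ?U A))"
        using True by auto
      moreover have "4 * k - 1 \<notin> sym_diff ?U A" "sym_diff ?U A \<subseteq> ?U"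
        using top A by auto
      ultimately have "odd (cube_deg (4 * k) (middle_split k) (sym_diff ?U A))"
        using odd_cube_deg_middle_split[OF k] by blast
      then show ?thesis
        using cube_deg_sym_diff_image[of "4 * k" ?U "middle_split k" A] sym_diff_image_middle_split[OF k]
        by simp
    qed
  qed
qed

lemma card_subsets_with_card_in:
  assumes "finite X" "finite J"
  shows "card {A. A \<subseteq> X \<and> card A \<in> J} = (\<Sum>j\<in>J. card X choose j)"
proof -
  have "{A. A \<subseteq> X \<and> card A \<in> J} = (\<Union>j\<in>J. {A. A \<subseteq> X \<and> card A = j})"
    by auto
  moreover have "card (\<Union>j\<in>J. {A. A \<subseteq> X \<and> card A = j}) = (\<Sum>j\<in>J. card {A. A \<subseteq> X \<and> card A = j})"
    using assms by (intro card_UN_disjoint) auto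
  ultimately show ?thesis
    using assms(1) by (simp add: n_subsets)
qed

lemma card_middle_split:
  assumes k: "k \<ge> 1"
  shows "card (middle_split k) = 2 * (\<Sum>i=1..k. (4 * k - 1) choose (2 * i - 1))"
proof -
  let ?S = "middle_split k" and ?U = "{..<4 * k}" and ?l = "4 * k - 1"
  define S0 where "S0 = {A\<in>?S. ?l \<notin> A}"
  have fin: "finite ?S"
    by (rule finite_subset[of _ "Pow ?U"]) (auto simp: middle_split_def)
  have inv: "sym_diff ?U A \<in> ?S \<longleftrightarrow> A \<in> ?S" for A
    using mem_sym_diff_image_iff[of A ?U ?S] sym_diff_image_middle_split[OF k] by simp
  have top: "?l \<notin> sym_diff ?U A \<longleftrightarrow> ?l \<in> A" for A
    using k by auto
  have "{A\<in>?S. ?l \<in> A} = sym_diff ?U ` S0"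
    by (rule set_eqI) (simp only: mem_sym_diff_image_iff S0_def mem_Collect_eq inv top)
  then have "card {A\<in>?S. ?l \<in> A} = card S0"
    by (simp add: card_sym_diff_image)
  moreover have "card ?S = card S0 + card {A\<in>?S. ?l \<in> A}"
  proof -
    have "?S = S0 \<union> {A\<in>?S. ?l \<in> A}"
      by (auto simp: S0_def)
    then have "card ?S = card (S0 \<union> {A\<in>?S. ?l \<in> A})"
      by (rule arg_cong)
    also have "\<dots> = card S0 + card {A\<in>?S. ?l \<in> A}"
      using fin by (intro card_Un_disjoint) (auto simp: S0_def)
    finally show ?thesis .
  qed
  moreover have "S0 = {A. A \<subseteq> {..<?l} \<and> card A \<in> (\<lambda>i. 2 * i - 1) ` {1..k}}"
  proof -
    have "odd j \<and> j < 2 * k \<longleftrightarrow> j \<in> (\<lambda>i. 2 * i - 1) ` {1..k}" for j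
    proof
      assume "odd j \<and> j < 2 * k"
      then show "j \<in> (\<lambda>i. 2 * i - 1) ` {1..k}"
        by (intro image_eqI[of _ _ "(j + 1) div 2"]) auto
    qed auto
    moreover have "A \<in> S0 \<longleftrightarrow> (A \<subseteq> ?U \<and> ?l \<notin> A) \<and> odd (card A) \<and> card A < 2 * k" for A
      by (auto simp: S0_def middle_split_def)
    moreover have "?U = insert ?l {..<?l}"
      using k lessThan_Suc[of ?l] by simp
    then have "A \<subseteq> ?U \<and> ?l \<notin> A \<longleftrightarrow> A \<subseteq> {..<?l}" for A
      by auto
    ultimately show ?thesis
      by (simp only: set_eq_iff mem_Collect_eq simp_thms)
  qed
  moreover have "inj_on (\<lambda>i. 2 * i - 1) {1..k}"
    by (auto simp: inj_on_def)
  ultimately show ?thesis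
    by (simp add: card_subsets_with_card_in sum.reindex)
qed

section \<open>Doubling the dimension\<close>

text \<open>\<open>collapse n\<close> is the projection \<open>(x, a, b) \<mapsto> x + (a + b) e\<^sub>0\<close> of \<open>Q\<^sub>n\<^sub>+\<^sub>2\<close> onto \<open>Q\<^sub>n\<close>: both new
directions are mapped to direction 0.\<close>

definition collapse :: "nat \<Rightarrow> nat set \<Rightarrow> nat set" where
  "collapse n A = (if n \<in> A \<longleftrightarrow> Suc n \<in> A then A \<inter> {..<n} else flip 0 (A \<inter> {..<n}))"

definition extend :: "nat \<Rightarrow> nat set set \<Rightarrow> nat set set" where
  "extend n S = {A. A \<subseteq> {..<n + 2} \<and> collapse n A \<in> S}"

lemma collapse_flip_low: "i < n \<Longrightarrow> collapse n (flip i A) = flip i (collapse n A)"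
  unfolding collapse_def flip_def by auto

lemma collapse_flip_high: "i = n \<or> i = Suc n \<Longrightarrow> collapse n (flip i A) = flip 0 (collapse n A)"
  unfolding collapse_def flip_def by auto

lemma collapse_subset: "0 < n \<Longrightarrow> collapse n A \<subseteq> {..<n}"
  unfolding collapse_def flip_def by auto

lemma cube_deg_extend:
  assumes n: "0 < n" and A: "A \<subseteq> {..<n + 2}"
  shows "cube_deg (n + 2) (extend n S) A =
    cube_deg n S (collapse n A) + (if flip 0 (collapse n A) \<in> S then 2 else 0)"
proof -
  let ?new = "if flip 0 (collapse n A) \<in> S then {n, Suc n} else {}"
  have "{i. i < n + 2 \<and> flip i A \<in> extend n S} = {i. i < n \<and> flip i (collapse n A) \<in> S} \<union> ?new"
  proof (intro set_eqI iffI)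
    fix i assume "i \<in> {i. i < n + 2 \<and> flip i A \<in> extend n S}"
    then show "i \<in> {i. i < n \<and> flip i (collapse n A) \<in> S} \<union> ?new"
      using collapse_flip_high[of i n A]
      by (cases "i < n") (auto simp: extend_def collapse_flip_low less_Suc_eq)
  next
    fix i assume "i \<in> {i. i < n \<and> flip i (collapse n A) \<in> S} \<union> ?new"
    then show "i \<in> {i. i < n + 2 \<and> flip i A \<in> extend n S}"
      using flip_subset_lessThan[OF A] collapse_flip_high[of i n A]
      by (cases "i < n") (auto simp: extend_def collapse_flip_low less_Suc_eq split: if_splits)
  qed
  then show ?thesis
    unfolding cube_deg_def by (simp add: card_Un_disjoint)
qed

lemma cube_odd_indep_extend:
  assumes S: "cube_odd_indep n S" and n: "0 < n"
  shows "cube_odd_indep (n + 2) (extend n S)"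
  unfolding cube_odd_indep_def
proof (intro conjI ballI allI impI)
  show "extend n S \<subseteq> Pow {..<n + 2}"
    by (auto simp: extend_def)
next
  fix A and i :: nat assume A: "A \<in> extend n S" and i: "i < n + 2"
  then have "collapse n A \<in> S"
    by (simp add: extend_def)
  then show "flip i A \<notin> extend n S"
    using cube_odd_indep_flip_notin[OF S] i n collapse_flip_high[of i n A]
    by (cases "i < n") (auto simp: extend_def collapse_flip_low less_Suc_eq)
next
  fix A assume A: "A \<in> Pow {..<n + 2} - extend n S"
  then have "collapse n A \<notin> S"
    by (simp add: extend_def)
  then have deg: "cube_deg n S (collapse n A) = 0 \<or> odd (cube_deg n S (collapse n A))"
    using cube_odd_indep_deg[OF S collapse_subset[OF n]] by blast
  have "flip 0 (collapse n A) \<in> S \<Longrightarrow> cube_deg n S (collapse n A) \<noteq> 0"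
    using n by (auto simp: cube_deg_eq_0_iff)
  then show "cube_deg (n + 2) (extend n S) A = 0 \<or> odd (cube_deg (n + 2) (extend n S) A)"
    using deg A cube_deg_extend[OF n] by auto
qed

lemma card_extend:
  assumes S: "S \<subseteq> Pow {..<n}" and n: "0 < n"
  shows "card (extend n S) = 4 * card S"
proof -
  define expand where "expand = (\<lambda>(B, p, q).
    (if p = q then B else flip 0 B) \<union> (if p then {n} else {}) \<union> (if q then {Suc n} else {}))"
  have expand: "collapse n (expand (B, p, q)) = B" "n \<in> expand (B, p, q) \<longleftrightarrow> p"
      "Suc n \<in> expand (B, p, q) \<longleftrightarrow> q" "expand (B, p, q) \<subseteq> {..<n + 2}"
    if B: "B \<subseteq> {..<n}" for B p q
  proof -
    have "flip 0 B \<subseteq> {..<n}"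
      using B n by (rule flip_subset_lessThan)
    with B show "collapse n (expand (B, p, q)) = B" "n \<in> expand (B, p, q) \<longleftrightarrow> p"
        "Suc n \<in> expand (B, p, q) \<longleftrightarrow> q" "expand (B, p, q) \<subseteq> {..<n + 2}"
      by (auto simp: expand_def collapse_def Int_absorb2 subset_eq)
  qed
  have "bij_betw (\<lambda>A. (collapse n A, n \<in> A, Suc n \<in> A)) (extend n S) (S \<times> UNIV \<times> UNIV)"
  proof (rule bij_betw_byWitness[where f' = expand])
    show "\<forall>A\<in>extend n S. expand (collapse n A, n \<in> A, Suc n \<in> A) = A"
      using n by (auto simp: expand_def extend_def collapse_def flip_def less_Suc_eq)
    show "\<forall>y\<in>S \<times> UNIV \<times> UNIV. (\<lambda>A. (collapse n A, n \<in> A, Suc n \<in> A)) (expand y) = y"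
      using S expand by auto
    show "(\<lambda>A. (collapse n A, n \<in> A, Suc n \<in> A)) ` extend n S \<subseteq> S \<times> UNIV \<times> UNIV"
      by (auto simp: extend_def)
    show "expand ` (S \<times> UNIV \<times> UNIV) \<subseteq> extend n S"
    proof clarify
      fix B p q assume "B \<in> S"
      moreover from this have "B \<subseteq> {..<n}"
        using S by auto
      ultimately show "expand (B, p, q) \<in> extend n S"
        using expand(1,4) by (simp add: extend_def)
    qed
  qed
  then have "card (extend n S) = card (S \<times> (UNIV :: (bool \<times> bool) set))"
    by (simp add: bij_betw_same_card)
  then show ?thesis
    by (simp add: card_cartesian_product UNIV_Times_UNIV[symmetric] del: UNIV_Times_UNIV)
qed

section \<open>Values of the odd independence number\<close>

theorem alpha_od_cube_power_of_two:
  assumes "r \<ge> 1"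
  shows "2 ^ r * alpha_od_cube (2 ^ r) = (2 ^ r - 1) * 2 ^ (2 ^ r - 1)"
proof (rule antisym)
  obtain S where S: "cube_odd_indep (2 ^ r) S" "card S = alpha_od_cube (2 ^ r)"
    by (rule alpha_od_cube_attained)
  have "(2 :: nat) \<le> 2 ^ r"
    using assms by (metis power_increasing power_one_right pos2 one_le_numeral)
  then show "2 ^ r * alpha_od_cube (2 ^ r) \<le> (2 ^ r - 1) * 2 ^ (2 ^ r - 1)"
    using cube_odd_indep_card_le[OF S(1)] assms S(2) by simp
  show "(2 ^ r - 1) * 2 ^ (2 ^ r - 1) \<le> 2 ^ r * alpha_od_cube (2 ^ r)"
    using card_le_alpha_od_cube[OF cube_odd_indep_hamming_family] card_hamming_family[of r]
    by (metis mult_le_mono2)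
qed

lemma four_mult_alpha_od_cube_le:
  assumes "0 < n"
  shows "4 * alpha_od_cube n \<le> alpha_od_cube (n + 2)"
proof -
  obtain S where S: "cube_odd_indep n S" "card S = alpha_od_cube n"
    by (rule alpha_od_cube_attained)
  have "card (extend n S) = 4 * card S"
    using card_extend[OF _ assms] S(1) by (simp add: cube_odd_indep_def)
  then show ?thesis
    using card_le_alpha_od_cube[OF cube_odd_indep_extend[OF S(1) assms]] S(2) by simp
qed

lemma power4_mult_alpha_od_cube_le:
  assumes "0 < n"
  shows "4 ^ m * alpha_od_cube n \<le> alpha_od_cube (n + 2 * m)"
proof (induction m)
  case (Suc m)
  have "4 ^ Suc m * alpha_od_cube n \<le> 4 * alpha_od_cube (n + 2 * m)"
    using Suc.IH by simp
  also have "\<dots> \<le> alpha_od_cube (n + 2 * Suc m)"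
    using four_mult_alpha_od_cube_le[of "n + 2 * m"] assms by simp
  finally show ?case .
qed simp

theorem proposition14:
  shows "(\<forall>k::nat. k \<ge> 1 \<longrightarrow>
            alpha_od_cube (4 * k) \<ge> 2 * (\<Sum>i=1..k. (4 * k - 1) choose (2 * i - 1)))
       \<and> alpha_od_cube 4 = 6 \<and> alpha_od_cube 6 = 24 \<and> alpha_od_cube 8 = 112
       \<and> (\<forall>d::nat. even d \<and> d \<ge> 8 \<longrightarrow> real (alpha_od_cube d) \<ge> 7 / 16 * (2::real) ^ d)"
proof (intro conjI allI impI)
  fix k :: nat assume "k \<ge> 1"
  then show "alpha_od_cube (4 * k) \<ge> 2 * (\<Sum>i=1..k. (4 * k - 1) choose (2 * i - 1))"
    using card_le_alpha_od_cube[OF cube_odd_indep_middle_split] card_middle_split by metis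
next
  show Q4: "alpha_od_cube 4 = 6"
    using alpha_od_cube_power_of_two[of 2] by simp
  show "alpha_od_cube 8 = 112"
    using alpha_od_cube_power_of_two[of 3] by simp
  show "alpha_od_cube 6 = 24"
    using four_mult_alpha_od_cube_le[of 4] Q4 alpha_od_cube_le[where n = 6, OF cube_odd_indep_6_card_le]
    by simp
next
  fix d :: nat assume d: "even d \<and> d \<ge> 8"
  then obtain m where m: "d = 8 + 2 * m"
    by (metis add_diff_inverse_nat dvd_diff_nat evenE even_numeral not_le)
  have "112 * 4 ^ m \<le> alpha_od_cube d"
    using power4_mult_alpha_od_cube_le[of 8 m] alpha_od_cube_power_of_two[of 3] m by simp
  then have "real (112 * 4 ^ m) \<le> real (alpha_od_cube d)"
    by (simp only: of_nat_le_iff)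
  moreover have "7 / 16 * (2 :: real) ^ d = real (112 * 4 ^ m)"
    by (simp add: m power_add power_mult)
  ultimately show "real (alpha_od_cube d) \<ge> 7 / 16 * (2 :: real) ^ d"
    by simp
qed

end
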